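(* Let $\mathbb{F}_q$ be a finite field with $\mathrm{char}(\mathbb{F}_q)>3$ and $3\mid q-1$, and let $z\in\mathbb{F}_q^\times$ be a non-cube. Then $\mathfrak{sl}_3(\mathbb{F}_q)$ has exactly two $J_3$-decompositions up to conjugacy, represented by $J_3(1,1)$ and $J_3(1,z)$. More precisely: $J_3(1,z^2)$ is conjugate to $J_3(1,z)$, $J_3(1,z)$ is not conjugate to $J_3(1,1)$, and every $J_3(a,b)$ with $a,b\in\mathbb{F}_q^\times$ is conjugate to one of $J_3(1,1)$, $J_3(1,z)$.
   Context: $\mathfrak{sl}_3(\mathbb{F}_q)$ is the Lie algebra of $3\times3$ traceless matrices over $\mathbb{F}_q$. Fix a primitive cube root of unity $u\in\mathbb{F}_q$. For nonzero $a,b\in\mathbb{F}_q$, $J_3(a,b)$ denotes the decomposition $\mathfrak{sl}_3(\mathbb{F}_q)=H_0\oplus H_1\oplus H_2\oplus H_3$, where $H_0$ is the subalgebra of traceless diagonal matrices and, for $j=1,2,3$ with $(\lambda_j,\mu_j)=(1,1),(u,u^2),(u^2,u)$ respectively, $H_j=\left\langle \begin{pmatrix}0&1&0\\0&0&\lambda_j a\\ \mu_j ab&0&0\end{pmatrix},\begin{pmatrix}0&0&1\\ \mu_j ab&0&0\\0&\lambda_j b&0\end{pmatrix}\right\rangle_{\mathbb{F}_q}$. A $J_3$-decomposition is any decomposition $J_3(a,b)$ with $a,b\in\mathbb{F}_q^\times$. Two such decompositions are conjugate if there is a Lie algebra automorphism of $\mathfrak{sl}_3(\mathbb{F}_q)$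 mapping each component of the first onto exactly one component of the second. *)

theory Defs
  imports "HOL-Analysis.Analysis"
begin

definition sl3 :: "('a::field ^ 3 ^ 3) set" where
  "sl3 = {A. trace A = 0}"

definition lie_bracket :: "'a::field ^ 3 ^ 3 \<Rightarrow> 'a ^ 3 ^ 3 \<Rightarrow> 'a ^ 3 ^ 3" where
  "lie_bracket A B = A ** B - B ** A"

definition msmult :: "'a::field \<Rightarrow> 'a ^ 3 ^ 3 \<Rightarrow> 'a ^ 3 ^ 3" where
  "msmult c A = (\<chi> i j. c * A $ i $ j)"

definition lie_aut_sl3 :: "('a::field ^ 3 ^ 3 \<Rightarrow> 'a ^ 3 ^ 3) \<Rightarrow> bool" where
  "lie_aut_sl3 f \<longleftrightarrow>
     bij_betw f sl3 sl3 \<and>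
     (\<forall>A\<in>sl3. \<forall>B\<in>sl3. f (A + B) = f A + f B) \<and>
     (\<forall>c. \<forall>A\<in>sl3. f (msmult c A) = msmult c (f A)) \<and>
     (\<forall>A\<in>sl3. \<forall>B\<in>sl3. f (lie_bracket A B) = lie_bracket (f A) (f B))"

definition span2 :: "'a::field ^ 3 ^ 3 \<Rightarrow> 'a ^ 3 ^ 3 \<Rightarrow> ('a ^ 3 ^ 3) set" where
  "span2 X Y = {msmult c X + msmult d Y | c d. True}"

definition diag0 :: "('a::field ^ 3 ^ 3) set" where
  "diag0 = {A. trace A = 0 \<and> (\<forall>i j. i \<noteq> j \<longrightarrow> A $ i $ j = 0)}"

definition J3X :: "'a::field \<Rightarrow> 'a \<Rightarrow> 'a \<Rightarrow> 'a \<Rightarrow> 'a ^ 3 ^ 3" where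
  "J3X lam mu a b = vector [vector [0, 1, 0], vector [0, 0, lam * a], vector [mu * a * b, 0, 0]]"

definition J3Y :: "'a::field \<Rightarrow> 'a \<Rightarrow> 'a \<Rightarrow> 'a \<Rightarrow> 'a ^ 3 ^ 3" where
  "J3Y lam mu a b = vector [vector [0, 0, 1], vector [mu * a * b, 0, 0], vector [0, lam * b, 0]]"

definition J3 :: "'a::field \<Rightarrow> 'a \<Rightarrow> 'a \<Rightarrow> nat \<Rightarrow> ('a ^ 3 ^ 3) set" where
  "J3 u a b j =
     (if j = 0 then diag0
      else if j = 1 then span2 (J3X 1 1 a b) (J3Y 1 1 a b)
      else if j = 2 then span2 (J3X u (u^2) a b) (J3Y u (u^2) a b)
      else span2 (J3X (u^2) u a b) (J3Y (u^2) u a b))"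

definition decomp_conj :: "(nat \<Rightarrow> ('a::field ^ 3 ^ 3) set) \<Rightarrow> (nat \<Rightarrow> ('a ^ 3 ^ 3) set) \<Rightarrow> bool" where
  "decomp_conj D E \<longleftrightarrow>
     (\<exists>f. lie_aut_sl3 f \<and> (\<forall>i\<in>{0..3}. \<exists>!j. j \<in> {0..3} \<and> f ` D i = E j))"

end

theory Submission
  imports Defs
begin

text \<open>Conjugating by a diagonal matrix rescales the two generators of every component of
  \<open>J\<^sub>3(a,b)\<close>, and shows that \<open>J\<^sub>3(a,b)\<close> and \<open>J\<^sub>3(a',b')\<close> are conjugate
  whenever \<open>a\<^sup>2b / a'\<^sup>2b'\<close> is a cube; swapping the last two coordinates exchanges \<open>a\<close> and \<open>b\<close>.
  As the cube map on \<open>\<bbbF>\<^sub>q\<^sup>\<times>\<close> is three-to-one, the cubes form a subgroup of index 3 with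
  coset representatives \<open>1, z, z\<^sup>2\<close>, which gives the first and the last claim.

  For the second claim, every component of \<open>J\<^sub>3(1,1)\<close> contains an element whose adjoint
  action has a nonzero eigenvalue, a property preserved by automorphisms. The component
  \<open>H\<^sub>1\<close> of \<open>J\<^sub>3(1,z)\<close> however lies in the field \<open>\<bbbF>\<^sub>q(\<theta>)\<close>, \<open>\<theta>\<^sup>3 = z\<close>, realised
  as matrices: if \<open>[A, B] = c B\<close> with \<open>c \<noteq> 0\<close>, then \<open>B p(A + c) = p(A) B = 0\<close> for the
  characteristic polynomial \<open>p\<close> of \<open>A\<close>, and \<open>p(A + c)\<close> is a nonzero, hence invertible,
  element of that field, so \<open>B = 0\<close>.\<close>

lemma matrix_add_rdistrib: "(A + B) ** C = A ** C + B ** C"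
  for A B :: "'a::semiring_1 ^ 'n ^ 'm" and C :: "'a ^ 'p ^ 'n"
  by (simp add: vec_eq_iff matrix_matrix_mult_def distrib_right sum.distrib)

lemma matrix_diff_ldistrib: "A ** (B - C) = A ** B - A ** C"
  for A :: "'a::ring_1 ^ 'n ^ 'm" and B C :: "'a ^ 'p ^ 'n"
  by (simp add: vec_eq_iff matrix_matrix_mult_def right_diff_distrib sum_subtractf)

lemma matrix_diff_rdistrib: "(A - B) ** C = A ** C - B ** C"
  for A B :: "'a::ring_1 ^ 'n ^ 'm" and C :: "'a ^ 'p ^ 'n"
  by (simp add: vec_eq_iff matrix_matrix_mult_def left_diff_distrib sum_subtractf)

lemma matrix_mult_3_entry:
  "(A ** B) $ i $ j = A$i$1 * B$1$j + A$i$2 * B$2$j + A$i$3 * B$3$j"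
  for A :: "'a::semiring_1 ^ 3 ^ 'm" and B :: "'a ^ 'n ^ 3"
  by (simp add: matrix_matrix_mult_def sum_3)

lemma trace_3: "trace A = A$1$1 + A$2$2 + A$3$3"
  for A :: "'a::semiring_1 ^ 3 ^ 3"
  by (simp add: trace_def sum_3)

lemma msmult_entry [simp]: "msmult c A $ i $ j = c * A$i$j"
  by (simp add: msmult_def)

lemma msmult_eq_mat_mult: "msmult c A = mat c ** A"
  by (simp add: vec_eq_iff forall_3 matrix_mult_3_entry mat_def)

lemma msmult_eq_mult_mat: "msmult c A = A ** mat c"
  by (simp add: vec_eq_iff forall_3 matrix_mult_3_entry mat_def)

lemma msmult_matrix_mult_left: "msmult c A ** B = msmult c (A ** B)"
  by (simp add: msmult_eq_mat_mult matrix_mul_assoc)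

lemma msmult_matrix_mult_right: "A ** msmult c B = msmult c (A ** B)"
  by (simp add: msmult_eq_mult_mat matrix_mul_assoc)

lemma msmult_eq_0_iff: "msmult c A = 0 \<longleftrightarrow> c = 0 \<or> A = 0"
  by (auto simp: vec_eq_iff)

lemma trace_msmult: "trace (msmult c A) = c * trace A"
  by (simp add: trace_3 algebra_simps)

lemma trace_lie_bracket: "trace (lie_bracket A B) = 0"
  by (simp add: lie_bracket_def trace_sub trace_mul_sym[of A B])

lemma span2_subset_sl3: "X \<in> sl3 \<Longrightarrow> Y \<in> sl3 \<Longrightarrow> span2 X Y \<subseteq> sl3"
  by (auto simp: span2_def sl3_def trace_add trace_msmult)

lemma span2_msmult:
  assumes "k \<noteq> 0" "l \<noteq> 0"
  shows "span2 (msmult k X) (msmult l Y) = span2 X Y"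
proof -
  have "msmult c (msmult k X) + msmult d (msmult l Y) = msmult (c * k) X + msmult (d * l) Y"
    for c d by (simp add: vec_eq_iff)
  moreover have "msmult c X + msmult d Y = msmult (c / k) (msmult k X) + msmult (d / l) (msmult l Y)"
    for c d using assms by (simp add: vec_eq_iff)
  ultimately show ?thesis
    unfolding span2_def by blast
qed

lemma span2_commute: "span2 X Y = span2 Y X"
  unfolding span2_def by (metis add.commute)

lemma image_span2:
  assumes "\<And>c d. f (msmult c X + msmult d Y) = msmult c (f X) + msmult d (f Y)"
  shows "f ` span2 X Y = span2 (f X) (f Y)"
proof -
  have "f ` span2 X Y = (\<lambda>(c, d). f (msmult c X + msmult d Y)) ` UNIV"
    unfolding span2_def by auto
  also have "\<dots> = (\<lambda>(c, d). msmult c (f X) + msmult d (f Y)) ` UNIV"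
    using assms by simp
  also have "\<dots> = span2 (f X) (f Y)"
    unfolding span2_def by auto
  finally show ?thesis .
qed

definition diag_mat :: "'a::zero ^ 'n \<Rightarrow> 'a ^ 'n ^ 'n" where
  "diag_mat d = (\<chi> i j. if i = j then d $ i else 0)"

lemma diag_mat_entry [simp]: "diag_mat d $ i $ j = (if i = j then d $ i else 0)"
  by (simp add: diag_mat_def)

definition mat_conj :: "'a::field ^ 3 ^ 3 \<Rightarrow> 'a ^ 3 ^ 3 \<Rightarrow> 'a ^ 3 ^ 3 \<Rightarrow> 'a ^ 3 ^ 3" where
  "mat_conj g h A = g ** A ** h"

lemma mat_conj_add: "mat_conj g h (A + B) = mat_conj g h A + mat_conj g h B"
  by (simp add: mat_conj_def matrix_add_ldistrib matrix_add_rdistrib)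

lemma mat_conj_diff: "mat_conj g h (A - B) = mat_conj g h A - mat_conj g h B"
  by (simp add: mat_conj_def matrix_diff_ldistrib matrix_diff_rdistrib)

lemma mat_conj_msmult: "mat_conj g h (msmult c A) = msmult c (mat_conj g h A)"
  by (simp add: mat_conj_def msmult_matrix_mult_left msmult_matrix_mult_right)

lemma mat_conj_mult:
  "h ** g = mat 1 \<Longrightarrow> mat_conj g h (A ** B) = mat_conj g h A ** mat_conj g h B"
  by (simp add: mat_conj_def matrix_mul_assoc) (simp flip: matrix_mul_assoc)

lemma mat_conj_inverse: "h ** g = mat 1 \<Longrightarrow> mat_conj h g (mat_conj g h A) = A"
  by (simp add: mat_conj_def matrix_mul_assoc) (simp flip: matrix_mul_assoc)

lemma image_mat_conj_span2: "mat_conj g h ` span2 X Y = span2 (mat_conj g h X) (mat_conj g h Y)"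
  by (rule image_span2) (simp add: mat_conj_add mat_conj_msmult)

lemma bij_betw_mat_conj:
  assumes "g ** h = mat 1" "h ** g = mat 1"
    and "mat_conj g h ` S \<subseteq> S" "mat_conj h g ` S \<subseteq> S"
  shows "bij_betw (mat_conj g h) S S"
  by (rule bij_betw_byWitness[where f'="mat_conj h g"]) (use assms mat_conj_inverse in auto)

lemma image_mat_conj_eq:
  assumes "g ** h = mat 1" "h ** g = mat 1"
    and "mat_conj g h ` S \<subseteq> S" "mat_conj h g ` S \<subseteq> S"
  shows "mat_conj g h ` S = S"
  using bij_betw_mat_conj[OF assms] by (rule bij_betw_imp_surj_on)

lemma trace_mat_conj: "h ** g = mat 1 \<Longrightarrow> trace (mat_conj g h A) = trace A"
  by (simp add: mat_conj_def trace_mul_sym[of "g ** A"] matrix_mul_assoc)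

lemma lie_aut_mat_conj:
  assumes "g ** h = mat 1" "h ** g = mat 1"
  shows "lie_aut_sl3 (mat_conj g h)"
proof -
  have "bij_betw (mat_conj g h) sl3 sl3"
    by (rule bij_betw_mat_conj) (auto simp: assms sl3_def trace_mat_conj)
  then show ?thesis
    using assms(2) by (simp add: lie_aut_sl3_def lie_bracket_def mat_conj_add mat_conj_diff
        mat_conj_msmult mat_conj_mult)
qed

lemma lie_aut_sl3_comp:
  assumes "lie_aut_sl3 f" "lie_aut_sl3 g"
  shows "lie_aut_sl3 (g \<circ> f)"
proof -
  have "bij_betw f sl3 sl3" "bij_betw g sl3 sl3"
    using assms unfolding lie_aut_sl3_def by blast+
  then have "bij_betw (g \<circ> f) sl3 sl3" "\<And>A. A \<in> sl3 \<Longrightarrow> f A \<in> sl3"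
    by (auto intro: bij_betw_trans bij_betw_apply)
  then show ?thesis
    using assms unfolding lie_aut_sl3_def by simp
qed

lemma lie_aut_sl3_zero:
  assumes "lie_aut_sl3 f"
  shows "f 0 = 0"
proof -
  have "(0::'a ^ 3 ^ 3) \<in> sl3"
    by (simp add: sl3_def trace_3)
  then have "f (0 + 0) = f 0 + f 0"
    using assms unfolding lie_aut_sl3_def by blast
  then show ?thesis
    by simp
qed

lemma decomp_conjI:
  assumes "lie_aut_sl3 f" "\<And>j. j \<in> {0..3} \<Longrightarrow> f ` D j = E j" "inj_on E {0..3}"
  shows "decomp_conj D E"
  unfolding decomp_conj_def using assms by (metis inj_onD)

lemma decomp_conj_trans:
  assumes "decomp_conj D E" "decomp_conj E F"
  shows "decomp_conj D F"
proof -
  obtain f where f: "lie_aut_sl3 f" "\<forall>i\<in>{0..3}. \<exists>!j. j \<in> {0..3} \<and> f ` D i = E j"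
    using assms(1) unfolding decomp_conj_def by blast
  obtain g where g: "lie_aut_sl3 g" "\<forall>i\<in>{0..3}. \<exists>!j. j \<in> {0..3} \<and> g ` E i = F j"
    using assms(2) unfolding decomp_conj_def by blast
  have components: "\<exists>!k. k \<in> {0..3} \<and> (g \<circ> f) ` D i = F k" if "i \<in> {0..3}" for i
  proof -
    obtain j where "j \<in> {0..3}" and fDE: "f ` D i = E j"
      using f(2) \<open>i \<in> {0..3}\<close> by blast
    have "(g \<circ> f) ` D i = g ` E j"
      by (simp only: image_comp[symmetric] fDE)
    then show ?thesis
      using g(2) \<open>j \<in> {0..3}\<close> by simp
  qed
  show ?thesis
    unfolding decomp_conj_def using lie_aut_sl3_comp[OF f(1) g(1)] components
    by (intro exI[of _ "g \<circ> f"]) simp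
qed

lemma cube_root_of_unity_facts:
  fixes u :: "'a::field"
  assumes "u ^ 3 = 1" "u \<noteq> 1"
  shows "u \<noteq> 0" "u ^ 2 \<noteq> 1" "u ^ 2 \<noteq> u" "1 + u + u ^ 2 = 0"
proof -
  have "(u - 1) * (1 + u + u ^ 2) = u ^ 3 - 1"
    by (simp add: algebra_simps power2_eq_square power3_eq_cube)
  then show "1 + u + u ^ 2 = 0"
    using assms by simp
  show "u \<noteq> 0" "u ^ 2 \<noteq> 1" "u ^ 2 \<noteq> u"
    using assms by (auto simp: power2_eq_square power3_eq_cube)
qed

lemma J3_subset_sl3: "J3 u a b j \<subseteq> sl3"
proof -
  have span_sl3: "span2 (J3X l m a b) (J3Y l m a b) \<subseteq> sl3" for l m
    by (rule span2_subset_sl3) (simp_all add: sl3_def trace_3 J3X_def J3Y_def)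
  have diag_sl3: "diag0 \<subseteq> sl3"
    by (auto simp: diag0_def sl3_def)
  show ?thesis
    by (simp add: J3_def span_sl3 diag_sl3)
qed

lemma J3X_in_span2: "J3X l m a b \<in> span2 (J3X l m a b) (J3Y l m a b)"
  unfolding span2_def by (rule CollectI, rule exI[of _ 1], rule exI[of _ 0]) (simp add: vec_eq_iff)

lemma J3X_in_span2_imp_eq:
  assumes "J3X l m a b \<in> span2 (J3X l' m' a b) (J3Y l' m' a b)" "a \<noteq> 0"
  shows "l = l'"
proof -
  obtain c d where "J3X l m a b = msmult c (J3X l' m' a b) + msmult d (J3Y l' m' a b)"
    using assms(1) unfolding span2_def by blast
  then have "J3X l m a b $ 1 $ 2 = c" "J3X l m a b $ 2 $ 3 = c * l' * a"
    by (simp_all add: J3X_def J3Y_def)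
  then show ?thesis
    using assms(2) by (simp add: J3X_def)
qed

lemma J3X_notin_diag0: "J3X l m a b \<notin> diag0"
proof
  assume "J3X l m a b \<in> diag0"
  moreover have "(1::3) \<noteq> 2"
    by simp
  ultimately have "J3X l m a b $ 1 $ 2 = 0"
    unfolding diag0_def by blast
  then show False
    by (simp add: J3X_def)
qed

lemma J3_0_witness: "\<exists>W. \<forall>k\<in>{0..3}. W \<in> J3 u a b k \<longleftrightarrow> k = 0"
proof -
  define D :: "'a::field ^ 3 ^ 3" where "D = diag_mat (vector [1, -1, 0])"
  have "D \<in> diag0"
    by (simp add: D_def diag0_def trace_3)
  moreover have "D \<notin> span2 (J3X l m a b) (J3Y l m a b)" for l m
  proof
    assume "D \<in> span2 (J3X l m a b) (J3Y l m a b)"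
    then obtain c d where "D = msmult c (J3X l m a b) + msmult d (J3Y l m a b)"
      unfolding span2_def by blast
    then have "D $ 1 $ 1 = 0"
      by (simp add: J3X_def J3Y_def)
    then show False
      by (simp add: D_def)
  qed
  ultimately show ?thesis
    by (intro exI[of _ D]) (auto simp: J3_def)
qed

lemma J3_nonzero_witness:
  fixes u a b :: "'a::field"
  assumes "u ^ 3 = 1" "u \<noteq> 1" "a \<noteq> 0" "j \<in> {1..3}"
  shows "\<exists>W. \<forall>k\<in>{0..3}. W \<in> J3 u a b k \<longleftrightarrow> k = j"
proof -
  note u = cube_root_of_unity_facts[OF assms(1,2)]
  define lam where "lam k = (if k = 1 then 1 else if k = 2 then u else u ^ 2)" for k :: nat
  define mu where "mu k = (if k = 1 then 1 else if k = 2 then u ^ 2 else u)" for k :: nat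
  have J3_span: "J3 u a b k = span2 (J3X (lam k) (mu k) a b) (J3Y (lam k) (mu k) a b)"
    if "k \<noteq> 0" for k
    using that by (simp add: J3_def lam_def mu_def)
  have lam_inj: "lam k = lam j \<Longrightarrow> k = j" if "k \<in> {1..3}" for k
    using that assms(4) u by (auto simp: lam_def split: if_splits)
  have "J3X (lam j) (mu j) a b \<in> J3 u a b k \<longleftrightarrow> k = j" if "k \<in> {0..3}" for k
  proof (cases "k = 0")
    case True
    then show ?thesis
      using assms(4) by (simp add: J3_def J3X_notin_diag0)
  next
    case False
    show ?thesis
    proof
      assume "J3X (lam j) (mu j) a b \<in> J3 u a b k"
      then have "lam j = lam k"
        using J3_span[OF False] J3X_in_span2_imp_eq[OF _ assms(3)] by simp
      then show "k = j"
        using lam_inj[of k] that False by auto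
    qed (use assms(4) in \<open>simp add: J3_span J3X_in_span2\<close>)
  qed
  then show ?thesis
    by blast
qed

lemma inj_on_J3:
  fixes u a b :: "'a::field"
  assumes "u ^ 3 = 1" "u \<noteq> 1" "a \<noteq> 0"
  shows "inj_on (J3 u a b) {0..3}"
proof
  fix j k assume jk: "j \<in> {0..3}" "k \<in> {0..3}" "J3 u a b j = J3 u a b k"
  have "\<exists>W. \<forall>k\<in>{0..3}. W \<in> J3 u a b k \<longleftrightarrow> k = j"
    using J3_0_witness[of u a b] J3_nonzero_witness[OF assms, where b=b and j=j] jk(1)
    by (cases "j = 0") auto
  then obtain W where "\<forall>k\<in>{0..3}. W \<in> J3 u a b k \<longleftrightarrow> k = j"
    by blast
  then show "j = k"
    using jk by metis
qed

section \<open>Explicit conjugacies between \<open>J\<^sub>3\<close>-decompositions\<close>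

lemma mat_conj_diag_mat_entry:
  "mat_conj (diag_mat d) (diag_mat e) A $ i $ j = d $ i * A $ i $ j * e $ j"
  for A :: "'a::field ^ 3 ^ 3"
proof -
  have "\<forall>i j. mat_conj (diag_mat d) (diag_mat e) A $ i $ j = d $ i * A $ i $ j * e $ j"
    by (simp add: forall_3 mat_conj_def matrix_mult_3_entry)
  then show ?thesis
    by blast
qed

lemma diag_mat_mult_eq_1:
  "d * e = 1 \<Longrightarrow> diag_mat d ** diag_mat e = (mat 1 :: 'a::field ^ 3 ^ 3)"
  by (simp add: vec_eq_iff forall_3 matrix_mult_3_entry mat_def)

lemma image_mat_conj_diag_mat_diag0:
  fixes d e :: "'a::field ^ 3"
  assumes "d * e = 1"
  shows "mat_conj (diag_mat d) (diag_mat e) ` diag0 = diag0"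
proof -
  have maps_into: "mat_conj (diag_mat d') (diag_mat e') ` diag0 \<subseteq> diag0"
    if "d' * e' = 1" for d' e' :: "'a ^ 3"
  proof -
    have diag_entry: "d' $ i * x * e' $ i = x" for i x
      using that by (metis mult.assoc mult.commute mult_1_left one_index vector_mult_component)
    show ?thesis
      by (auto simp: diag0_def trace_3 mat_conj_diag_mat_entry diag_entry)
  qed
  have "e * d = 1"
    using assms by (simp add: mult.commute)
  then show ?thesis
    using assms by (intro image_mat_conj_eq diag_mat_mult_eq_1 maps_into)
qed

lemma decomp_conj_J3_rescale:
  fixes u a b a' b' c :: "'a::field"
  assumes "u ^ 3 = 1" "u \<noteq> 1"
    and nonzero: "a \<noteq> 0" "a' \<noteq> 0" "c \<noteq> 0"
    and "a ^ 2 * b = c ^ 3 * a' ^ 2 * b'"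
  shows "decomp_conj (J3 u a b) (J3 u a' b')"
proof -
  define d :: "'a ^ 3" where "d = vector [c ^ 2 * a' / a, c * a' / a, 1]"
  define e :: "'a ^ 3" where "e = vector [a / (c ^ 2 * a'), a / (c * a'), 1]"
  define f where "f = mat_conj (diag_mat d) (diag_mat e)"
  have de: "d * e = 1" "e * d = 1"
    using nonzero by (simp_all add: vec_eq_iff forall_3 d_def e_def)
  have b: "b = c ^ 3 * a' ^ 2 * b' / a ^ 2"
    using assms(6) nonzero by (simp add: field_simps)
  have "f (J3X l m a b) = msmult c (J3X l m a' b')" for l m
    using nonzero by (simp add: vec_eq_iff forall_3 f_def mat_conj_diag_mat_entry d_def e_def b
        J3X_def field_simps power2_eq_square power3_eq_cube)
  moreover have "f (J3Y l m a b) = msmult (c ^ 2 * a' / a) (J3Y l m a' b')" for l m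
    using nonzero by (simp add: vec_eq_iff forall_3 f_def mat_conj_diag_mat_entry d_def e_def b
        J3Y_def field_simps power2_eq_square power3_eq_cube)
  ultimately have "f ` J3 u a b j = J3 u a' b' j" for j
    using nonzero by (simp add: J3_def f_def image_mat_conj_span2 span2_msmult
        image_mat_conj_diag_mat_diag0[OF de(1)])
  moreover have "lie_aut_sl3 f"
    unfolding f_def using de by (intro lie_aut_mat_conj diag_mat_mult_eq_1)
  ultimately show ?thesis
    using inj_on_J3[OF assms(1,2,4)] by (intro decomp_conjI)
qed

definition swap23 :: "'a::field ^ 3 ^ 3" where
  "swap23 = vector [vector [1, 0, 0], vector [0, 0, 1], vector [0, 1, 0]]"

lemma swap23_mult_swap23: "swap23 ** swap23 = mat 1"
  by (simp add: vec_eq_iff forall_3 matrix_mult_3_entry mat_def swap23_def)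

lemma mat_conj_swap23:
  "mat_conj swap23 swap23 A = vector [vector [A $ 1 $ 1, A $ 1 $ 3, A $ 1 $ 2],
     vector [A $ 3 $ 1, A $ 3 $ 3, A $ 3 $ 2], vector [A $ 2 $ 1, A $ 2 $ 3, A $ 2 $ 2]]"
  by (simp add: vec_eq_iff forall_3 matrix_mult_3_entry mat_conj_def swap23_def)

lemma image_mat_conj_swap23_diag0: "mat_conj swap23 swap23 ` diag0 = diag0"
proof -
  have "mat_conj swap23 swap23 ` diag0 \<subseteq> diag0"
    by (auto simp: diag0_def mat_conj_swap23 trace_3 forall_3 add_ac)
  then show ?thesis
    using swap23_mult_swap23 by (intro image_mat_conj_eq)
qed

lemma decomp_conj_J3_swap:
  fixes u a b :: "'a::field"
  assumes "u ^ 3 = 1" "u \<noteq> 1" "b \<noteq> 0"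
  shows "decomp_conj (J3 u a b) (J3 u b a)"
proof -
  define f where "f = mat_conj (swap23 :: 'a ^ 3 ^ 3) swap23"
  have "f (J3X l m a b) = J3Y l m b a" "f (J3Y l m a b) = J3X l m b a" for l m
    by (simp_all add: vec_eq_iff forall_3 f_def mat_conj_swap23 J3X_def J3Y_def mult_ac)
  then have "f ` J3 u a b j = J3 u b a j" for j
    by (simp add: J3_def f_def image_mat_conj_span2 image_mat_conj_swap23_diag0 span2_commute)
  moreover have "lie_aut_sl3 f"
    unfolding f_def using swap23_mult_swap23 by (intro lie_aut_mat_conj)
  ultimately show ?thesis
    using inj_on_J3[OF assms] by (intro decomp_conjI)
qed

section \<open>Cubes in a finite field\<close>

lemma noncube_mult_cube_eq_cube:
  fixes x y z :: "'a::field"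
  assumes "\<not> (\<exists>w. w ^ 3 = z)" "x ^ 3 = z * y ^ 3"
  shows "y = 0"
proof (rule ccontr)
  assume "y \<noteq> 0"
  then have "(x / y) ^ 3 = z"
    using assms(2) by (simp add: power_divide)
  then show False
    using assms(1) by blast
qed

lemma cube_eq_cube_iff:
  fixes u c w :: "'a::field"
  assumes "u ^ 3 = 1" "u \<noteq> 1"
  shows "w ^ 3 = c ^ 3 \<longleftrightarrow> w = c \<or> w = u * c \<or> w = u ^ 2 * c"
proof -
  have "(w - c) * (w - u * c) * (w - u ^ 2 * c)
      = w ^ 3 - (1 + u + u ^ 2) * c * w ^ 2 + u * (1 + u + u ^ 2) * c ^ 2 * w - u ^ 3 * c ^ 3"
    by (simp add: algebra_simps power2_eq_square power3_eq_cube)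
  also have "\<dots> = w ^ 3 - c ^ 3"
    using assms cube_root_of_unity_facts[OF assms] by simp
  finally show ?thesis
    by auto
qed

lemma card_cube_roots:
  fixes u c :: "'a::field"
  assumes "u ^ 3 = 1" "u \<noteq> 1" "c \<noteq> 0"
  shows "card {w. w ^ 3 = c ^ 3} = 3"
proof -
  note u = cube_root_of_unity_facts[OF assms(1,2)]
  have "{w. w ^ 3 = c ^ 3} = {c, u * c, u ^ 2 * c}"
    using cube_eq_cube_iff[OF assms(1,2)] by auto
  moreover have "c \<noteq> u * c" "c \<noteq> u ^ 2 * c" "u * c \<noteq> u ^ 2 * c"
    using assms(2,3) u by auto
  ultimately show ?thesis
    by simp
qed

definition nonzero_cubes :: "'a::field set" where
  "nonzero_cubes = (\<lambda>c. c ^ 3) ` (- {0})"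

lemma card_nonzero_eq_3_card_nonzero_cubes:
  fixes u :: "'a::{field, finite}"
  assumes "u ^ 3 = 1" "u \<noteq> 1"
  shows "card (- {0 :: 'a}) = 3 * card (nonzero_cubes :: 'a set)"
proof -
  have "- {0} = (\<Union>y\<in>nonzero_cubes. {w :: 'a. w ^ 3 = y})"
    by (auto simp: nonzero_cubes_def)
  also have "card \<dots> = (\<Sum>y\<in>nonzero_cubes. card {w :: 'a. w ^ 3 = y})"
    by (rule card_UN_disjoint) auto
  also have "\<dots> = (\<Sum>y\<in>(nonzero_cubes :: 'a set). 3)"
    using card_cube_roots[OF assms] by (intro sum.cong refl) (auto simp: nonzero_cubes_def)
  finally show ?thesis
    by simp
qed

lemma nonzero_cubes_cosets_disjoint:
  fixes z :: "'a::field"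
  assumes noncube: "\<not> (\<exists>w. w ^ 3 = z)"
  defines "K \<equiv> nonzero_cubes"
  shows "K \<inter> (*) z ` K = {}" "K \<inter> (*) (z ^ 2) ` K = {}" "(*) z ` K \<inter> (*) (z ^ 2) ` K = {}"
proof -
  have "z \<noteq> 0"
    using noncube by (metis power_zero_numeral)
  have no_z: "z * a ^ 3 \<noteq> b ^ 3" if "a \<noteq> 0" for a b
    using noncube_mult_cube_eq_cube[OF noncube, of b a] that by auto
  have no_z2: "z ^ 2 * a ^ 3 \<noteq> b ^ 3" if "b \<noteq> 0" for a b
  proof
    assume "z ^ 2 * a ^ 3 = b ^ 3"
    then have "(z * a) ^ 3 = z * b ^ 3"
      by (simp add: power_mult_distrib power2_eq_square power3_eq_cube mult_ac)
    then show False
      using noncube_mult_cube_eq_cube[OF noncube] that by blast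
  qed
  have no_zz: "z * c ^ 3 \<noteq> z ^ 2 * d ^ 3" if "d \<noteq> 0" for c d
  proof
    assume "z * c ^ 3 = z ^ 2 * d ^ 3"
    then have "z * d ^ 3 = c ^ 3"
      using \<open>z \<noteq> 0\<close> by (simp add: power2_eq_square mult.assoc)
    then show False
      using no_z[OF that] by blast
  qed
  show "K \<inter> (*) z ` K = {}" "K \<inter> (*) (z ^ 2) ` K = {}" "(*) z ` K \<inter> (*) (z ^ 2) ` K = {}"
    using no_z no_z2 no_zz unfolding K_def nonzero_cubes_def by (auto simp: image_image) metis+
qed

lemma nonzero_cube_classes:
  fixes u z x :: "'a::{field, finite}"
  assumes "u ^ 3 = 1" "u \<noteq> 1" and noncube: "\<not> (\<exists>w. w ^ 3 = z)" and "x \<noteq> 0"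
  shows "\<exists>c. c \<noteq> 0 \<and> (x = c ^ 3 \<or> x = z * c ^ 3 \<or> x = z ^ 2 * c ^ 3)"
proof -
  define K :: "'a set" where "K = nonzero_cubes"
  have "z \<noteq> 0"
    using noncube by (metis power_zero_numeral)
  then have "card ((*) z ` K) = card K" "card ((*) (z ^ 2) ` K) = card K"
    by (auto intro!: card_image inj_onI)
  then have "card (K \<union> (*) z ` K \<union> (*) (z ^ 2) ` K) = card (- {0 :: 'a})"
    using nonzero_cubes_cosets_disjoint[OF noncube] card_nonzero_eq_3_card_nonzero_cubes[OF assms(1,2)]
    by (simp add: K_def card_Un_disjoint Int_Un_distrib2)
  moreover have "K \<union> (*) z ` K \<union> (*) (z ^ 2) ` K \<subseteq> - {0}"
    using \<open>z \<noteq> 0\<close> by (auto simp: K_def nonzero_cubes_def)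
  ultimately have "K \<union> (*) z ` K \<union> (*) (z ^ 2) ` K = - {0}"
    by (simp add: card_subset_eq)
  then show ?thesis
    using \<open>x \<noteq> 0\<close> by (auto simp: K_def nonzero_cubes_def)
qed

section \<open>The cubic extension as a matrix algebra\<close>

text \<open>\<open>zcirc z a b c\<close> is the matrix of multiplication by \<open>a + b\<theta> + c\<theta>\<^sup>2\<close> on \<open>\<bbbF>(\<theta>)\<close>,
  \<open>\<theta>\<^sup>3 = z\<close>, acting on row vectors in the basis \<open>1, \<theta>, \<theta>\<^sup>2\<close>; \<open>cubic_norm\<close> is the field norm.\<close>

definition zcirc :: "'a::field \<Rightarrow> 'a \<Rightarrow> 'a \<Rightarrow> 'a \<Rightarrow> 'a ^ 3 ^ 3" where
  "zcirc z a b c = vector [vector [a, b, c], vector [c * z, a, b], vector [b * z, c * z, a]]"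

definition cubic_norm :: "'a::field \<Rightarrow> 'a \<Rightarrow> 'a \<Rightarrow> 'a \<Rightarrow> 'a" where
  "cubic_norm z a b c = a ^ 3 + b ^ 3 * z + c ^ 3 * z ^ 2 - 3 * a * b * c * z"

lemma zcirc_mult_adjugate:
  "zcirc z a b c ** zcirc z (a ^ 2 - b * c * z) (c ^ 2 * z - a * b) (b ^ 2 - a * c)
     = mat (cubic_norm z a b c)"
  by (simp add: vec_eq_iff forall_3 matrix_mult_3_entry mat_def zcirc_def cubic_norm_def
      algebra_simps power2_eq_square power3_eq_cube)

lemma cubic_norm_eq_0_iff:
  fixes z a b c :: "'a::field"
  assumes noncube: "\<not> (\<exists>w. w ^ 3 = z)"
  shows "cubic_norm z a b c = 0 \<longleftrightarrow> a = 0 \<and> b = 0 \<and> c = 0"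
proof
  assume N: "cubic_norm z a b c = 0"
  define a' where "a' = a ^ 2 - b * c * z"
  define b' where "b' = c ^ 2 * z - a * b"
  define c' where "c' = b ^ 2 - a * c"
  have "b' ^ 2 - a' * c' = c * cubic_norm z a b c"
    "a' ^ 2 - z * b' * c' = a * cubic_norm z a b c"
    "z * c' ^ 2 - a' * b' = b * cubic_norm z a b c"
    by (simp_all add: a'_def b'_def c'_def cubic_norm_def algebra_simps
        power2_eq_square power3_eq_cube)
  then have adj: "b' ^ 2 = a' * c'" "a' ^ 2 = z * b' * c'" "z * c' ^ 2 = a' * b'"
    using N by simp_all
  then have "b' ^ 3 = z * c' ^ 3"
    by (simp add: power2_eq_square power3_eq_cube)
  then have "c' = 0"
    by (rule noncube_mult_cube_eq_cube[OF noncube])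
  then have "a' = 0" "b' = 0"
    using adj by simp_all
  then have abc: "a ^ 2 = b * c * z" "c ^ 2 * z = a * b" "b ^ 2 = a * c"
    using \<open>c' = 0\<close> by (simp_all add: a'_def b'_def c'_def)
  have "b ^ 3 = c * (a * b)"
    using abc(3) by (simp add: power2_eq_square power3_eq_cube mult_ac)
  also have "\<dots> = z * c ^ 3"
    using abc(2) by (simp add: power2_eq_square power3_eq_cube mult_ac)
  finally have "c = 0"
    by (rule noncube_mult_cube_eq_cube[OF noncube])
  then show "a = 0 \<and> b = 0 \<and> c = 0"
    using abc by simp
qed (simp add: cubic_norm_def)

lemma matrix_mult_zcirc_eq_0:
  fixes z a b c :: "'a::field" and B :: "'a ^ 3 ^ 3"
  assumes "\<not> (\<exists>w. w ^ 3 = z)" "a \<noteq> 0 \<or> b \<noteq> 0 \<or> c \<noteq> 0" "B ** zcirc z a b c = 0"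
  shows "B = 0"
proof -
  have "msmult (cubic_norm z a b c) B = B ** mat (cubic_norm z a b c)"
    by (rule msmult_eq_mult_mat)
  also have "\<dots> = 0"
    by (simp flip: zcirc_mult_adjugate add: matrix_mul_assoc assms(3))
  moreover have "cubic_norm z a b c \<noteq> 0"
    using assms(2) cubic_norm_eq_0_iff[OF assms(1)] by simp
  ultimately show ?thesis
    by (simp add: msmult_eq_0_iff)
qed

lemma lie_bracket_eq_msmult_imp_intertwines:
  "lie_bracket A B = msmult c B \<Longrightarrow> B ** (A + mat c) = A ** B"
  by (simp add: lie_bracket_def matrix_add_ldistrib flip: msmult_eq_mult_mat)
    (metis diff_add_cancel add.commute)

lemma intertwines_cube:
  fixes A B Z :: "'a::semiring_1 ^ 'n ^ 'n"
  assumes "B ** Z = A ** B"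
  shows "B ** (Z ** Z ** Z) = (A ** A ** A) ** B"
proof -
  have "B ** (Z ** Z ** Z) = ((B ** Z) ** Z) ** Z"
    by (simp add: matrix_mul_assoc)
  also have "\<dots> = A ** (A ** (A ** B))"
    by (simp add: assms flip: matrix_mul_assoc)
  also have "\<dots> = (A ** A ** A) ** B"
    by (simp add: matrix_mul_assoc)
  finally show ?thesis .
qed

lemma zcirc_0_cube:
  "zcirc z 0 s t ** zcirc z 0 s t ** zcirc z 0 s t
     = msmult (3 * s * t * z) (zcirc z 0 s t) + mat (s ^ 3 * z + t ^ 3 * z ^ 2)"
  by (simp add: vec_eq_iff forall_3 matrix_mult_3_entry mat_def zcirc_def
      algebra_simps power2_eq_square power3_eq_cube)

lemma zcirc_0_shift_cube:
  fixes z s t c :: "'a::field"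
  defines "Z \<equiv> zcirc z 0 s t + mat c"
  shows "Z ** Z ** Z - msmult (3 * s * t * z) Z - mat (s ^ 3 * z + t ^ 3 * z ^ 2)
    = msmult c (zcirc z (c ^ 2 + 3 * s * t * z) (3 * t ^ 2 * z + 3 * c * s) (3 * s ^ 2 + 3 * c * t))"
  by (simp add: Z_def vec_eq_iff forall_3 matrix_mult_3_entry mat_def zcirc_def
      algebra_simps power2_eq_square power3_eq_cube)

lemma zcirc_0_shift_cube_coeffs_nonzero:
  fixes z s t c :: "'a::field"
  assumes noncube: "\<not> (\<exists>w. w ^ 3 = z)" and "(3::'a) \<noteq> 0" "c \<noteq> 0"
  shows "c ^ 2 + 3 * s * t * z \<noteq> 0 \<or> 3 * t ^ 2 * z + 3 * c * s \<noteq> 0 \<or> 3 * s ^ 2 + 3 * c * t \<noteq> 0"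
proof (rule ccontr)
  assume "\<not> ?thesis"
  then have "c ^ 2 + 3 * s * t * z = 0" "3 * (t ^ 2 * z + c * s) = 0" "3 * (s ^ 2 + c * t) = 0"
    by (simp_all add: algebra_simps)
  then have 0: "c ^ 2 + 3 * s * t * z = 0" "t ^ 2 * z = - (c * s)" "s ^ 2 = - (c * t)"
    using \<open>(3::'a) \<noteq> 0\<close> mult_eq_0_iff eq_neg_iff_add_eq_0 by metis+
  have "s * ((- c) ^ 3 - z * s ^ 3) = c * (c * (t ^ 2 * z)) - z * (s ^ 2) ^ 2"
    using 0(2) by (simp add: algebra_simps power2_eq_square power3_eq_cube)
  also have "\<dots> = 0"
    using 0(3) by (simp add: algebra_simps power2_eq_square)
  finally have "s = 0 \<or> (- c) ^ 3 = z * s ^ 3"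
    by simp
  then have "s = 0"
    using noncube_mult_cube_eq_cube[OF noncube] by blast
  then show False
    using 0 \<open>c \<noteq> 0\<close> by simp
qed

lemma zcirc_0_ad_eigenvector_eq_0:
  fixes z s t c :: "'a::field" and B :: "'a ^ 3 ^ 3"
  assumes noncube: "\<not> (\<exists>w. w ^ 3 = z)" and "(3::'a) \<noteq> 0" "c \<noteq> 0"
    and eigen: "lie_bracket (zcirc z 0 s t) B = msmult c B"
  shows "B = 0"
proof -
  define A where "A = zcirc z 0 s t"
  define Z where "Z = A + mat c"
  define q where "q = 3 * s * t * z"
  define r where "r = s ^ 3 * z + t ^ 3 * z ^ 2"
  have BZ: "B ** Z = A ** B"
    using eigen unfolding A_def Z_def by (rule lie_bracket_eq_msmult_imp_intertwines)
  have "B ** (Z ** Z ** Z - msmult q Z - mat r)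
      = (A ** A ** A) ** B - msmult q (A ** B) - msmult r B"
    by (simp add: matrix_diff_ldistrib intertwines_cube[OF BZ] msmult_matrix_mult_right BZ
        flip: msmult_eq_mult_mat)
  also have "\<dots> = 0"
    by (simp add: A_def q_def r_def zcirc_0_cube matrix_add_rdistrib msmult_matrix_mult_left
        flip: msmult_eq_mat_mult)
  finally have "msmult c (B ** zcirc z (c ^ 2 + q) (3 * t ^ 2 * z + 3 * c * s) (3 * s ^ 2 + 3 * c * t)) = 0"
    by (simp add: Z_def A_def q_def r_def zcirc_0_shift_cube msmult_matrix_mult_right)
  then show ?thesis
    using assms(3) zcirc_0_shift_cube_coeffs_nonzero[OF assms(1-3)]
    by (auto simp: q_def msmult_eq_0_iff intro: matrix_mult_zcirc_eq_0[OF noncube])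
qed

section \<open>An invariant separating \<open>J\<^sub>3(1,1)\<close> from \<open>J\<^sub>3(1,z)\<close>\<close>

definition ad_has_nonzero_eigenvalue :: "'a::field ^ 3 ^ 3 \<Rightarrow> bool" where
  "ad_has_nonzero_eigenvalue A \<longleftrightarrow>
     (\<exists>B\<in>sl3. B \<noteq> 0 \<and> (\<exists>c. c \<noteq> 0 \<and> lie_bracket A B = msmult c B))"

lemma lie_aut_sl3_reflects_ad_eigenvalue:
  assumes f: "lie_aut_sl3 f" and "A \<in> sl3" "ad_has_nonzero_eigenvalue (f A)"
  shows "ad_has_nonzero_eigenvalue A"
proof -
  obtain B c where "B \<in> sl3" "B \<noteq> 0" "c \<noteq> 0" and eigen: "lie_bracket (f A) B = msmult c B"
    using assms(3) unfolding ad_has_nonzero_eigenvalue_def by blast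
  have bij: "bij_betw f sl3 sl3"
    using f unfolding lie_aut_sl3_def by blast
  then obtain B' where B': "B' \<in> sl3" "f B' = B"
    using \<open>B \<in> sl3\<close> by (metis bij_betw_imp_surj_on imageE)
  have "f (lie_bracket A B') = f (msmult c B')"
    using f \<open>A \<in> sl3\<close> B' eigen unfolding lie_aut_sl3_def by simp
  moreover have "lie_bracket A B' \<in> sl3" "msmult c B' \<in> sl3"
    using B'(1) by (simp_all add: sl3_def trace_lie_bracket trace_msmult)
  ultimately have "lie_bracket A B' = msmult c B'"
    using bij by (auto simp: bij_betw_def dest: inj_onD)
  moreover have "B' \<noteq> 0"
    using B' \<open>B \<noteq> 0\<close> lie_aut_sl3_zero[OF f] by auto
  ultimately show ?thesis
    unfolding ad_has_nonzero_eigenvalue_def using B'(1) \<open>c \<noteq> 0\<close> by blast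
qed

text \<open>The eigenvector is \<open>v w\<^sup>T\<close> for a vector \<open>v = (1, 1, m)\<close> fixed by \<open>J3X l m 1 1\<close> and a
  left eigenvector \<open>w = (u, 1, l u\<^sup>2)\<close> of \<open>J3X l m 1 1\<close> with eigenvalue \<open>u\<close>.\<close>

lemma J3X_1_1_ad_eigenvector:
  fixes l m u :: "'a::field"
  assumes "l * m = 1" "u ^ 3 = 1"
  shows "lie_bracket (J3X l m 1 1) (vector [vector [u, 1, l * u ^ 2], vector [u, 1, l * u ^ 2],
    vector [m * u, m, u ^ 2]]) = msmult (1 - u) (vector [vector [u, 1, l * u ^ 2],
    vector [u, 1, l * u ^ 2], vector [m * u, m, u ^ 2]])"
proof -
  have lm: "l * (m * x) = x" "m * (l * x) = x" for x
    using assms(1) by (simp_all add: mult.assoc[symmetric] mult.commute[of m])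
  have uuu: "u * (u * u) = 1" "u * (u * (u * x)) = x" for x
    using assms(2) by (simp_all add: mult.assoc[symmetric] power3_eq_cube)
  show ?thesis
    by (simp add: vec_eq_iff forall_3 matrix_mult_3_entry lie_bracket_def J3X_def
        algebra_simps power2_eq_square lm uuu assms(1))
qed

lemma J3X_1_1_ad_has_nonzero_eigenvalue:
  fixes l m u :: "'a::field"
  assumes "l * m = 1" "u ^ 3 = 1" "u \<noteq> 1"
  shows "ad_has_nonzero_eigenvalue (J3X l m 1 1)"
proof -
  define B :: "'a ^ 3 ^ 3" where
    "B = vector [vector [u, 1, l * u ^ 2], vector [u, 1, l * u ^ 2], vector [m * u, m, u ^ 2]]"
  have "B \<in> sl3"
    using cube_root_of_unity_facts[OF assms(2,3)] by (simp add: B_def sl3_def trace_3 add_ac)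
  moreover have "B $ 1 $ 2 \<noteq> 0"
    by (simp add: B_def)
  then have "B \<noteq> 0"
    by auto
  moreover have "lie_bracket (J3X l m 1 1) B = msmult (1 - u) B"
    using J3X_1_1_ad_eigenvector[OF assms(1,2)] by (simp only: B_def)
  ultimately show ?thesis
    unfolding ad_has_nonzero_eigenvalue_def using assms(3)
    by (intro bexI[of _ B] conjI exI[of _ "1 - u"]) auto
qed

lemma diag0_ad_has_nonzero_eigenvalue: "\<exists>A\<in>diag0. ad_has_nonzero_eigenvalue (A :: 'a::field ^ 3 ^ 3)"
proof -
  define E :: "'a ^ 3 ^ 3" where "E = vector [vector [0, 1, 0], vector [0, 0, 0], vector [0, 0, 0]]"
  define D :: "'a ^ 3 ^ 3" where "D = diag_mat (vector [1, 0, -1])"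
  have "E $ 1 $ 2 \<noteq> 0"
    by (simp add: E_def)
  then have "E \<noteq> 0"
    by auto
  moreover have "E \<in> sl3" "lie_bracket D E = msmult 1 E"
    by (simp_all add: D_def E_def sl3_def trace_3 vec_eq_iff forall_3
        matrix_mult_3_entry lie_bracket_def)
  ultimately have "ad_has_nonzero_eigenvalue D"
    unfolding ad_has_nonzero_eigenvalue_def by (intro bexI[of _ E] conjI exI[of _ 1]) auto
  moreover have "D \<in> diag0"
    by (simp add: D_def diag0_def trace_3)
  ultimately show ?thesis
    by blast
qed

lemma J3_1_1_component_ad_eigenvalue:
  fixes u :: "'a::field"
  assumes "u ^ 3 = 1" "u \<noteq> 1" "j \<in> {0..3}"
  shows "\<exists>A\<in>J3 u 1 1 j. ad_has_nonzero_eigenvalue A"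
proof -
  have "\<exists>A\<in>span2 (J3X l m 1 1) (J3Y l m 1 1). ad_has_nonzero_eigenvalue A"
    if "l * m = 1" for l m :: 'a
    using J3X_1_1_ad_has_nonzero_eigenvalue[OF that assms(1,2)] J3X_in_span2 by blast
  moreover have "u * u ^ 2 = 1" "u ^ 2 * u = 1"
    using assms(1) by (simp_all add: power2_eq_square power3_eq_cube mult.assoc)
  ultimately show ?thesis
    using assms(3) diag0_ad_has_nonzero_eigenvalue by (auto simp: J3_def)
qed

lemma J3_1_z_component_no_ad_eigenvalue:
  fixes u z :: "'a::field"
  assumes "\<not> (\<exists>w. w ^ 3 = z)" "(3::'a) \<noteq> 0" "A \<in> J3 u 1 z 1"
  shows "\<not> ad_has_nonzero_eigenvalue A"
proof -
  obtain s t where "A = msmult s (J3X 1 1 1 z) + msmult t (J3Y 1 1 1 z)"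
    using assms(3) by (auto simp: J3_def span2_def)
  then have "A = zcirc z 0 s t"
    by (simp add: vec_eq_iff forall_3 zcirc_def J3X_def J3Y_def)
  then show ?thesis
    unfolding ad_has_nonzero_eigenvalue_def
    using zcirc_0_ad_eigenvector_eq_0[OF assms(1,2)] by blast
qed

lemma not_decomp_conj_J3_1_z_J3_1_1:
  fixes u z :: "'a::field"
  assumes "u ^ 3 = 1" "u \<noteq> 1" "\<not> (\<exists>w. w ^ 3 = z)" "(3::'a) \<noteq> 0"
  shows "\<not> decomp_conj (J3 u 1 z) (J3 u 1 1)"
proof
  assume "decomp_conj (J3 u 1 z) (J3 u 1 1)"
  then obtain f where f: "lie_aut_sl3 f"
    and "\<exists>!j. j \<in> {0..3} \<and> f ` J3 u 1 z 1 = J3 u 1 1 j"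
    unfolding decomp_conj_def by auto
  then obtain j where "j \<in> {0..3}" "f ` J3 u 1 z 1 = J3 u 1 1 j"
    by (auto dest: ex1_implies_ex)
  then obtain A where "A \<in> J3 u 1 z 1" "ad_has_nonzero_eigenvalue (f A)"
    using J3_1_1_component_ad_eigenvalue[OF assms(1,2)] by (metis imageE)
  moreover note J3_subset_sl3[of u 1 z 1]
  ultimately show False
    using lie_aut_sl3_reflects_ad_eigenvalue[OF f] J3_1_z_component_no_ad_eigenvalue[OF assms(3,4)]
    by blast
qed

lemma three_neq_0_if_char_gt_3: "CHAR('a::semiring_1) > 3 \<Longrightarrow> (3::'a) \<noteq> 0"
  using of_nat_eq_0_iff_char_dvd[of 3, where 'a='a] by (auto dest: dvd_imp_le)

lemma decomp_conj_J3_1_z2_J3_1_z: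
  fixes u z :: "'a::field"
  assumes "u ^ 3 = 1" "u \<noteq> 1" "z \<noteq> 0"
  shows "decomp_conj (J3 u 1 (z ^ 2)) (J3 u 1 z)"
proof (rule decomp_conj_trans)
  show "decomp_conj (J3 u 1 (z ^ 2)) (J3 u (z ^ 2) 1)"
    using assms by (intro decomp_conj_J3_swap) simp_all
  show "decomp_conj (J3 u (z ^ 2) 1) (J3 u 1 z)"
    using assms by (intro decomp_conj_J3_rescale[where c=z])
      (simp_all add: power2_eq_square power3_eq_cube)
qed

lemma decomp_conj_J3_1_1_or_J3_1_z:
  fixes u z a b :: "'a::{field, finite}"
  assumes u: "u ^ 3 = 1" "u \<noteq> 1" and noncube: "\<not> (\<exists>w. w ^ 3 = z)" and "a \<noteq> 0" "b \<noteq> 0"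
  shows "decomp_conj (J3 u a b) (J3 u 1 1) \<or> decomp_conj (J3 u a b) (J3 u 1 z)"
proof -
  have "a ^ 2 * b \<noteq> 0"
    using assms(4,5) by simp
  then obtain c where "c \<noteq> 0"
    and classes: "a ^ 2 * b = c ^ 3 \<or> a ^ 2 * b = z * c ^ 3 \<or> a ^ 2 * b = z ^ 2 * c ^ 3"
    using nonzero_cube_classes[OF u noncube] by blast
  have rescale: "decomp_conj (J3 u a b) (J3 u 1 b')" if "a ^ 2 * b = b' * c ^ 3" for b'
    using that by (intro decomp_conj_J3_rescale[OF u \<open>a \<noteq> 0\<close> one_neq_zero \<open>c \<noteq> 0\<close>])
      (simp add: mult.commute)
  have "z \<noteq> 0"
    using noncube by (metis power_zero_numeral)
  then have "decomp_conj (J3 u 1 (z ^ 2)) (J3 u 1 z)"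
    by (rule decomp_conj_J3_1_z2_J3_1_z[OF u])
  then show ?thesis
    using classes rescale[of 1] rescale[of z] rescale[of "z ^ 2"] decomp_conj_trans by auto
qed

theorem theorem3p11:
  fixes u z :: "'a::{field, finite}"
  assumes "CHAR('a) > 3"
    and "3 dvd (CARD('a) - 1)"
    and "u ^ 3 = 1" and "u \<noteq> 1"
    and "z \<noteq> 0" and "\<not> (\<exists>w. w ^ 3 = z)"
  shows "decomp_conj (J3 u 1 (z ^ 2)) (J3 u 1 z)
       \<and> \<not> decomp_conj (J3 u 1 z) (J3 u 1 1)
       \<and> (\<forall>a b. a \<noteq> 0 \<longrightarrow> b \<noteq> 0 \<longrightarrow>
             decomp_conj (J3 u a b) (J3 u 1 1) \<or> decomp_conj (J3 u a b) (J3 u 1 z))"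
  using decomp_conj_J3_1_z2_J3_1_z[OF assms(3-5)] decomp_conj_J3_1_1_or_J3_1_z[OF assms(3,4,6)]
    not_decomp_conj_J3_1_z_J3_1_1[OF assms(3,4,6) three_neq_0_if_char_gt_3[OF assms(1)]]
  by blast

end
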